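(* Let $S,T\subseteq\mathbb{Z}_{>0}$ be finite and $x\in T\triangleleft S$. If $T_{<x}\setminus(T\triangleleft S)$ is empty, then $(T\setminus\{x\})\triangleleft S=(T\triangleleft S)\setminus\{x\}$. Otherwise, $(T\setminus\{x\})\triangleleft S=((T\triangleleft S)\setminus\{x\})\cup\{x'\}$, where $x'=\max(T_{<x}\setminus(T\triangleleft S))$.
   Context: For a finite set $T\subseteq\mathbb{Z}_{>0}$, $T_{<x}=\{t\in T:t<x\}$. For finite $S,T\subseteq\mathbb{Z}_{>0}$, $T\triangleleft S$ is computed by going through the elements of $S$ from largest to smallest; each $s$ picks the largest element of $T$ that is less than $s$ and not yet picked (if one exists); $T\triangleleft S$ is the set of picked elements. *)

theory Defs
  imports Main
begin

definition pick_step :: "nat set \<Rightarrow> nat \<Rightarrow> nat set \<Rightarrow> nat set" where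
  "pick_step T s P =
     (let C = {t \<in> T. t < s \<and> t \<notin> P} in if C = {} then P else insert (Max C) P)"

definition tri :: "nat set \<Rightarrow> nat set \<Rightarrow> nat set" (infixl "\<triangleleft>" 65) where
  "tri T S = fold (pick_step T) (rev (sorted_list_of_set S)) {}"

definition below :: "nat set \<Rightarrow> nat \<Rightarrow> nat set" where
  "below T x = {t \<in> T. t < x}"

end

theory Submission
  imports Defs
begin

text \<open>Run the picking process on T and on T - {x} with the same pickers. The runs agree
  until x is picked; from then on the (T - {x})-state is obtained from the T-state by letting
  one extra picker placed at x pick and then deleting x (the map unpick). Every further step
  preserves this correspondence, because any two picking steps commute. So the result for
  T - {x} is unpick of the result for T, which is the claimed formula.\<close>

definition candidates :: "nat set \<Rightarrow> nat \<Rightarrow> nat set \<Rightarrow> nat set" where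
  "candidates T s P = {t \<in> T. t < s \<and> t \<notin> P}"

lemma pick_step_eq:
  "pick_step T s P =
     (if candidates T s P = {} then P else insert (Max (candidates T s P)) P)"
  unfolding pick_step_def candidates_def Let_def ..

lemma below_Diff_eq_candidates: "below T x - P = candidates T x P"
  unfolding below_def candidates_def by auto

lemma finite_candidates: "finite T \<Longrightarrow> finite (candidates T s P)"
  unfolding candidates_def by simp

lemma candidates_insert: "candidates T s (insert m P) = candidates T s P - {m}"
  unfolding candidates_def by auto

lemma candidates_antimono: "P \<subseteq> Q \<Longrightarrow> candidates T s Q \<subseteq> candidates T s P"
  unfolding candidates_def by auto

lemma candidates_Diff: "x \<in> P \<Longrightarrow> candidates (T - {x}) s (P - {x}) = candidates T s P"
  unfolding candidates_def by auto

lemma subset_pick_step: "P \<subseteq> pick_step T s P"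
  by (auto simp: pick_step_eq)

lemma Max_candidates_less:
  assumes "finite T" and "candidates T s P \<noteq> {}"
  shows "Max (candidates T s P) < s"
proof -
  have "Max (candidates T s P) \<in> candidates T s P"
    using Max_in[OF finite_candidates[OF assms(1)] assms(2)] .
  then show ?thesis by (simp add: candidates_def)
qed

lemma candidates_insert_Max:
  assumes "finite T" and "candidates T s P \<noteq> {}"
  defines "m \<equiv> Max (candidates T s P)"
  shows "candidates T s (insert m P) = candidates T m P"
proof -
  have le: "t \<le> m" if "t \<in> candidates T s P" for t
    using that Max_ge[OF finite_candidates[OF assms(1)]] unfolding m_def by blast
  have "m < s"
    using Max_candidates_less[OF assms(1,2)] unfolding m_def .
  show ?thesis
  proof (intro equalityI subsetI)
    fix t assume "t \<in> candidates T s (insert m P)"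
    then have "t \<in> candidates T s P" "t \<noteq> m" by (simp_all add: candidates_insert)
    then show "t \<in> candidates T m P"
      using le[of t] unfolding candidates_def by simp
  next
    fix t assume "t \<in> candidates T m P"
    with \<open>m < s\<close> show "t \<in> candidates T s (insert m P)"
      unfolding candidates_def by simp
  qed
qed

lemma pick_step_insert_Max:
  assumes "finite T" and "candidates T s P \<noteq> {}"
  defines "m \<equiv> Max (candidates T s P)"
  shows "pick_step T s (insert m P) = pick_step T m (insert m P)"
proof -
  have "m \<notin> candidates T m P" by (simp add: candidates_def)
  then have "candidates T s (insert m P) = candidates T m (insert m P)"
    using candidates_insert_Max[OF assms(1,2)] unfolding m_def[symmetric]
    by (simp add: candidates_insert)
  then show ?thesis by (simp add: pick_step_eq)
qed

lemma pick_step_insert_unpicked: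
  assumes "finite T" and "x \<notin> pick_step T s P"
  shows "pick_step T s (insert x P) = insert x (pick_step T s P)"
proof (cases "candidates T s P = {}")
  case True
  then show ?thesis by (simp add: pick_step_eq candidates_insert)
next
  case False
  let ?C = "candidates T s P"
  have fin: "finite ?C" using finite_candidates[OF assms(1)] .
  have m: "Max ?C \<in> ?C - {x}"
    using Max_in[OF fin False] assms(2) False by (auto simp: pick_step_eq)
  have "Max (?C - {x}) = Max ?C"
    by (rule Max_eqI) (use fin m in auto)
  with m False show ?thesis
    by (auto simp: pick_step_eq candidates_insert)
qed

lemma pick_step_Diff:
  assumes "finite T" and "x \<in> P"
  shows "pick_step (T - {x}) s (P - {x}) = pick_step T s P - {x}"
proof -
  let ?C = "candidates T s P"
  have "x \<notin> ?C" using assms(2) by (simp add: candidates_def)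
  then have "?C \<noteq> {} \<Longrightarrow> Max ?C \<noteq> x"
    using Max_in[OF finite_candidates[OF assms(1)]] by metis
  then show ?thesis
    using candidates_Diff[OF assms(2), of T s] by (auto simp: pick_step_eq)
qed

lemma pick_step_commute_le:
  assumes "finite T" and "a \<le> b"
  shows "pick_step T a (pick_step T b P) = pick_step T b (pick_step T a P)"
proof (cases "candidates T a P = {}")
  case True
  have "candidates T a (pick_step T b P) = {}"
    using True candidates_antimono[OF subset_pick_step] by blast
  then show ?thesis using True by (simp add: pick_step_eq)
next
  case False
  let ?ma = "Max (candidates T a P)" and ?mb = "Max (candidates T b P)"
  have sub: "candidates T a P \<subseteq> candidates T b P"
    using assms(2) unfolding candidates_def by auto
  have ma: "?ma \<in> candidates T b P" "?ma < a"
    using Max_in[OF finite_candidates[OF assms(1)] False] sub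
      Max_candidates_less[OF assms(1) False] by auto
  then have Cb: "candidates T b P \<noteq> {}" by auto
  show ?thesis
  proof (cases "?mb < a")
    case True
    \<comment> \<open>all candidates of b lie below a, so a and b act alike from P onwards\<close>
    have same: "pick_step T a Q = pick_step T b Q" if "P \<subseteq> Q" for Q
    proof -
      have "t < a" if "t \<in> candidates T b Q" for t
        using that candidates_antimono[OF \<open>P \<subseteq> Q\<close>, of T b] True
          Max_ge[OF finite_candidates[OF assms(1)], of t b P] by auto
      then have "candidates T a Q = candidates T b Q"
        using assms(2) unfolding candidates_def by auto
      then show ?thesis by (simp add: pick_step_eq)
    qed
    show ?thesis
      using same[OF subset_pick_step] same[of P] subset_pick_step by simp
  next
    case False
    have pa: "pick_step T a P = insert ?ma P" and pb: "pick_step T b P = insert ?mb P"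
      using \<open>candidates T a P \<noteq> {}\<close> Cb by (simp_all add: pick_step_eq)
    have "?mb \<notin> pick_step T a P" "?ma \<notin> pick_step T b P"
      using Max_in[OF finite_candidates[OF assms(1)] Cb] ma False
      unfolding pa pb candidates_def by auto
    from this[THEN pick_step_insert_unpicked[OF assms(1)]] show ?thesis
      unfolding pa pb by (simp add: insert_commute)
  qed
qed

lemma pick_step_commute:
  "finite T \<Longrightarrow> pick_step T a (pick_step T b P) = pick_step T b (pick_step T a P)"
  by (metis nle_le pick_step_commute_le)

definition unpick :: "nat set \<Rightarrow> nat \<Rightarrow> nat set \<Rightarrow> nat set" where
  "unpick T x P = (if x \<in> P then pick_step T x P - {x} else P)"

lemma pick_step_unpick:
  assumes "finite T"
  shows "pick_step (T - {x}) s (unpick T x P) = unpick T x (pick_step T s P)"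
proof (cases "x \<in> P")
  case True
  have "x \<in> pick_step T x P" "x \<in> pick_step T s P"
    using True subset_pick_step by blast+
  then have "unpick T x (pick_step T s P) = pick_step T s (pick_step T x P) - {x}"
    unfolding unpick_def pick_step_commute[OF assms, of s x] by simp
  also have "\<dots> = pick_step (T - {x}) s (unpick T x P)"
    using pick_step_Diff[OF assms \<open>x \<in> pick_step T x P\<close>] True by (simp add: unpick_def)
  finally show ?thesis ..
next
  case False
  have lhs: "pick_step (T - {x}) s P = pick_step T s (insert x P) - {x}"
    using pick_step_Diff[OF assms, of x "insert x P" s] False by simp
  show ?thesis
  proof (cases "x \<in> pick_step T s P")
    case True
    have C: "candidates T s P \<noteq> {}"
    proof
      assume "candidates T s P = {}"
      then have "pick_step T s P = P" by (simp add: pick_step_eq)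
      with True False show False by simp
    qed
    have x: "Max (candidates T s P) = x"
      using True False C by (simp add: pick_step_eq)
    have "pick_step T s (insert x P) = pick_step T x (insert x P)"
      using pick_step_insert_Max[OF assms C] unfolding x .
    moreover have "pick_step T s P = insert x P"
      using C x by (simp add: pick_step_eq)
    ultimately show ?thesis
      using False lhs by (simp add: unpick_def)
  next
    case False
    then show ?thesis
      using \<open>x \<notin> P\<close> lhs pick_step_insert_unpicked[OF assms False] by (simp add: unpick_def)
  qed
qed

lemma fold_pick_step_unpick:
  "finite T \<Longrightarrow>
    fold (pick_step (T - {x})) ss (unpick T x P) = unpick T x (fold (pick_step T) ss P)"
  by (induction ss arbitrary: P) (simp_all add: pick_step_unpick)

lemma tri_Diff_singleton: "finite T \<Longrightarrow> (T - {x}) \<triangleleft> S = unpick T x (T \<triangleleft> S)"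
  unfolding tri_def using fold_pick_step_unpick[of T x _ "{}"] by (simp add: unpick_def)

theorem lemma4p5:
  fixes S T :: "nat set" and x :: nat
  assumes "finite S" and "finite T" and "0 \<notin> S" and "0 \<notin> T"
    and "x \<in> T \<triangleleft> S"
  shows "(below T x - (T \<triangleleft> S) = {} \<longrightarrow>
            (T - {x}) \<triangleleft> S = (T \<triangleleft> S) - {x}) \<and>
         (below T x - (T \<triangleleft> S) \<noteq> {} \<longrightarrow>
            (T - {x}) \<triangleleft> S = ((T \<triangleleft> S) - {x}) \<union> {Max (below T x - (T \<triangleleft> S))})"
proof -
  let ?P = "T \<triangleleft> S"
  let ?C = "candidates T x ?P"
  have tri: "(T - {x}) \<triangleleft> S = pick_step T x ?P - {x}"
    using tri_Diff_singleton[OF assms(2)] assms(5) by (simp add: unpick_def)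
  show ?thesis
  proof (cases "?C = {}")
    case True
    then show ?thesis
      using tri by (simp add: below_Diff_eq_candidates pick_step_eq)
  next
    case False
    then have "Max ?C \<noteq> x"
      using Max_candidates_less[OF assms(2) False] by simp
    moreover have "pick_step T x ?P = insert (Max ?C) ?P"
      using False by (simp add: pick_step_eq)
    ultimately have "(T - {x}) \<triangleleft> S = (?P - {x}) \<union> {Max ?C}"
      unfolding tri by auto
    then show ?thesis
      using False by (simp add: below_Diff_eq_candidates)
  qed
qed

end
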